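(* Let $\Sigma$ be an alphabet, let $Z\subseteq \Sigma^{\mathbb Z}$ be a sofic shift and let $f:\mathbb R^n\times Z\to\mathbb R^n$ be an arbitrary function. The system $$x(k+1)=f(x(k),\omega(k)),\qquad \omega(k+1)=\sigma(\omega(k)),\qquad x(0)=x_0\in\mathbb R^n,\ \omega(0)=\bar z\in Z$$ is globally uniformly asymptotically stable (GUAS) if and only if there exists a sequence-dependent Lyapunov function for it.
   Context: $\Sigma$ is a nonempty countable set (alphabet). $\Sigma^{\mathbb Z}$ is the set of bi-infinite sequences $\bar z=(z_k)_{k\in\mathbb Z}$ with $z_k\in\Sigma$, and $\sigma:\Sigma^{\mathbb Z}\to\Sigma^{\mathbb Z}$ is the shift, $\sigma(\bar z)_k=z_{k+1}$. A labeled graph on $\Sigma$ is $\mathcal G=(S,E)$ with $S$ a finite set of nodes and $E\subseteq S\times S\times\Sigma$. A bi-infinite walk labeled by $\bar z$ is a sequence $(e_k)_{k\in\mathbb Z}$ of edges $e_k=(s_k,s_{k+1},z_k)\in E$. $\mathcal Z(\mathcal G)$ is the set of $\bar z\in\Sigma^{\mathbb Z}$ labeling some bi-infinite walk. A set $Z\subseteq\Sigma^{\mathbb Z}$ is a sofic shift if $Z=\mathcal Z(\mathcal G)$ for some labeled graph $\mathcal G$ (so $\sigma(Z)=Z$). $\Phi(k,x_0,\bar z)$ denotes the state $x(k)$ of the solution of the system above (so $x(k+1)=f(x(k),\sigma^k(\bar z))$). Classes: $\alpha:\mathbb R_{\ge0}\to\mathbb R_{\ge0}$ is of class $\mathcal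 K$ if continuous, strictly increasing, $\alpha(0)=0$; of class $\mathcal K_\infty$ if moreover unbounded; $\beta:\mathbb R_{\ge0}\times\mathbb R_{\ge0}\to\mathbb R_{\ge0}$ is of class $\mathcal{KL}$ if continuous, $\beta(\cdot,s)\in\mathcal K$ for each $s$, and $\beta(r,\cdot)$ is decreasing with limit $0$ for each $r$. GUAS: there exists $\beta\in\mathcal{KL}$ with $|\Phi(k,x_0,\bar z)|\le\beta(|x_0|,k)$ for all $k\in\mathbb N$, $x_0\in\mathbb R^n$, $\bar z\in Z$. A sequence-dependent Lyapunov function is a function $\mathcal V:\mathbb R^n\times Z\to\mathbb R$ for which there exist $\alpha_1,\alpha_2\in\mathcal K_\infty$ and $\gamma\in[0,1)$ with $\alpha_1(|x|)\le\mathcal V(x,\bar z)\le\alpha_2(|x|)$ and $\mathcal V(f(x,\bar z),\sigma(\bar z))\le\gamma\,\mathcal V(x,\bar z)$ for all $x\in\mathbb R^n$, $\bar z\in Z$. *)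

theory Defs
  imports "HOL-Analysis.Analysis" "HOL-Library.Countable"
begin

definition shift :: "(int \<Rightarrow> 'a) \<Rightarrow> (int \<Rightarrow> 'a)" where
  "shift z = (\<lambda>k. z (k + 1))"

text \<open>Labeled graph: finite node set S (nodes taken from nat, w.l.o.g.) and
  edge set E \<subseteq> S x S x Sigma. Sequences labeling a bi-infinite walk.\<close>

definition walk_labels :: "nat set \<Rightarrow> (nat \<times> nat \<times> 'a) set \<Rightarrow> (int \<Rightarrow> 'a) set" where
  "walk_labels S E = {z. \<exists>s :: int \<Rightarrow> nat. \<forall>k. (s k, s (k + 1), z k) \<in> E}"

definition labeled_graph :: "nat set \<Rightarrow> (nat \<times> nat \<times> 'a) set \<Rightarrow> bool" where
  "labeled_graph S E \<longleftrightarrow> finite S \<and> E \<subseteq> S \<times> S \<times> UNIV"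

definition sofic :: "(int \<Rightarrow> 'a) set \<Rightarrow> bool" where
  "sofic Z \<longleftrightarrow> (\<exists>S E. labeled_graph S E \<and> Z = walk_labels S E)"

primrec Phi :: "('x \<Rightarrow> (int \<Rightarrow> 'a) \<Rightarrow> 'x) \<Rightarrow> nat \<Rightarrow> 'x \<Rightarrow> (int \<Rightarrow> 'a) \<Rightarrow> 'x" where
  "Phi f 0 x0 z = x0"
| "Phi f (Suc k) x0 z = f (Phi f k x0 z) ((shift ^^ k) z)"

definition class_K :: "(real \<Rightarrow> real) \<Rightarrow> bool" where
  "class_K a \<longleftrightarrow> continuous_on {0..} a \<and> strict_mono_on {0..} a \<and> a 0 = 0"

definition class_Kinf :: "(real \<Rightarrow> real) \<Rightarrow> bool" where
  "class_Kinf a \<longleftrightarrow> class_K a \<and> (\<forall>M. \<exists>r\<ge>0. a r > M)"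

definition class_KL :: "(real \<Rightarrow> real \<Rightarrow> real) \<Rightarrow> bool" where
  "class_KL b \<longleftrightarrow> continuous_on ({0..} \<times> {0..}) (\<lambda>(r, s). b r s)
     \<and> (\<forall>s\<ge>0. class_K (\<lambda>r. b r s))
     \<and> (\<forall>r\<ge>0. antimono_on {0..} (b r) \<and> ((b r) \<longlongrightarrow> 0) at_top)"

definition GUAS :: "(real^'n \<Rightarrow> (int \<Rightarrow> 'a) \<Rightarrow> real^'n) \<Rightarrow> (int \<Rightarrow> 'a) set \<Rightarrow> bool" where
  "GUAS f Z \<longleftrightarrow> (\<exists>\<beta>. class_KL \<beta> \<and>
     (\<forall>k x0 z. z \<in> Z \<longrightarrow> norm (Phi f k x0 z) \<le> \<beta> (norm x0) (real k)))"

definition seq_lyapunov ::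
  "(real^'n \<Rightarrow> (int \<Rightarrow> 'a) \<Rightarrow> real^'n) \<Rightarrow> (int \<Rightarrow> 'a) set \<Rightarrow> (real^'n \<Rightarrow> (int \<Rightarrow> 'a) \<Rightarrow> real) \<Rightarrow> bool" where
  "seq_lyapunov f Z V \<longleftrightarrow> (\<exists>\<alpha>1 \<alpha>2 \<gamma>. class_Kinf \<alpha>1 \<and> class_Kinf \<alpha>2 \<and> 0 \<le> \<gamma> \<and> \<gamma> < 1 \<and>
     (\<forall>x z. z \<in> Z \<longrightarrow> \<alpha>1 (norm x) \<le> V x z \<and> V x z \<le> \<alpha>2 (norm x)
        \<and> V (f x z) (shift z) \<le> \<gamma> * V x z))"

end

theory Submission
  imports Defs
begin

text \<open>
  Sufficiency: along a solution a sequence-dependent Lyapunov function decays like \<open>\<gamma>\<^sup>k\<close>,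
  because a sofic shift is shift invariant; hence \<open>\<alpha>\<^sub>1 \<bar>x(k)\<bar> \<le> \<gamma>\<^sup>k \<alpha>\<^sub>2 \<bar>x\<^sub>0\<bar>\<close>, and
  \<open>\<beta>(r, s) = \<alpha>\<^sub>1\<^sup>-\<^sup>1(c\<^sup>s \<alpha>\<^sub>2(r))\<close> is a \<open>\<K>\<L>\<close> bound.

  Necessity: from a \<open>\<K>\<L>\<close> bound \<open>\<beta>\<close> one builds \<open>\<K>\<^sub>\<infinity>\<close> functions \<open>h\<close>, \<open>\<alpha>\<^sub>2\<close> with
  \<open>h(\<beta>(r, k)) \<le> 2\<^sup>-\<^sup>k \<alpha>\<^sub>2(r)\<close> for all integers \<open>k \<ge> 0\<close> (a discrete version of Sontag's
  \<open>\<K>\<L>\<close> lemma). Then \<open>V(x, z) = sup\<^sub>k 2\<^sup>k h(\<bar>\<Phi>(k, x, z)\<bar>)\<close> lies between \<open>h\<close> and \<open>\<alpha>\<^sub>2\<close>,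
  and shifting the index of the supremum gives \<open>V(f(x, z), \<sigma> z) \<le> V(x, z) / 2\<close>.
\<close>

section \<open>Comparison functions\<close>

lemma class_K_nonneg: "class_K a \<Longrightarrow> 0 \<le> x \<Longrightarrow> 0 \<le> a x"
  unfolding class_K_def strict_mono_on_def
  by (metis atLeast_iff order.order_iff_strict order_refl)

lemma class_K_mono: "class_K a \<Longrightarrow> 0 \<le> x \<Longrightarrow> x \<le> y \<Longrightarrow> a x \<le> a y"
  unfolding class_K_def strict_mono_on_def
  by (metis atLeast_iff order.order_iff_strict order_trans)

lemma class_K_strict_mono: "class_K a \<Longrightarrow> 0 \<le> x \<Longrightarrow> x < y \<Longrightarrow> a x < a y"
  unfolding class_K_def strict_mono_on_def by auto

lemma strict_mono_surj_inv:
  fixes f :: "real \<Rightarrow> real"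
  assumes mono: "strict_mono f" and cont: "\<And>x. isCont f x" and surj: "surj f"
  shows "strict_mono (inv f)" and "isCont (inv f) y"
proof -
  have inv_f: "inv f (f x) = x" for x
    using strict_mono_imp_inj_on[OF mono] by (simp add: inv_f_f)
  show "strict_mono (inv f)"
  proof (rule strict_monoI)
    fix u v :: real assume "u < v"
    obtain x y where xy: "u = f x" "v = f y" using surj by (metis surjD)
    with \<open>u < v\<close> have "x < y" using mono by (simp add: strict_mono_less)
    then show "inv f u < inv f v" by (simp add: xy inv_f)
  qed
  obtain x where "y = f x" using surj by (metis surjD)
  moreover have "isCont (inv f) (f x)"
    by (rule isCont_inverse_function2[of "x - 1" x "x + 1"]) (auto simp: inv_f cont)
  ultimately show "isCont (inv f) y" by simp
qed

lemma class_Kinf_left_inverse: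
  assumes K: "class_Kinf a"
  obtains g where "\<And>y. isCont g y" "strict_mono g" "g 0 = 0" "\<And>x. 0 \<le> x \<Longrightarrow> g (a x) = x"
proof -
  have Ka: "class_K a" using K by (simp add: class_Kinf_def)
  have a0: "a 0 = 0" using Ka by (simp add: class_K_def)
  \<comment> \<open>Extending \<open>a\<close> by the identity on the negative axis yields a homeomorphism of \<open>\<real>\<close>.\<close>
  define e where "e t = (if t \<le> 0 then t else a t)" for t
  have e_pos: "e t = a t" if "0 \<le> t" for t using that a0 by (auto simp: e_def)
  have e_cont: "continuous_on UNIV e"
    unfolding e_def
    by (rule continuous_on_cases_le[where h="\<lambda>x. x", simplified])
       (use Ka a0 in \<open>auto simp: class_K_def atLeast_def intro: continuous_intros\<close>)
  then have e_isCont: "isCont e t" for t by (simp add: continuous_on_eq_continuous_at)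
  have e_mono: "strict_mono e"
  proof (rule strict_monoI)
    fix x y :: real assume "x < y"
    then show "e x < e y"
      using class_K_strict_mono[OF Ka, of 0 y] class_K_strict_mono[OF Ka, of x y] a0
      by (auto simp: e_def)
  qed
  have e_surj: "surj e"
  proof (rule surjI)
    fix y :: real
    show "e (inv e y) = y"
    proof (cases "y \<le> 0")
      case True
      then have "e y = y" by (simp add: e_def)
      then show ?thesis by (metis f_inv_into_f rangeI)
    next
      case False
      obtain r where r: "0 \<le> r" "y < a r" using K by (auto simp: class_Kinf_def)
      have "\<exists>x\<ge>0. x \<le> r \<and> e x = y"
        by (rule IVT) (use r False e_pos[of 0] e_pos[of r] a0 e_isCont in auto)
      then show ?thesis by (metis f_inv_into_f rangeI)
    qed
  qed
  show ?thesis
  proof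
    show "isCont (inv e) y" for y by (rule strict_mono_surj_inv(2)[OF e_mono e_isCont e_surj])
    show "strict_mono (inv e)" by (rule strict_mono_surj_inv(1)[OF e_mono e_isCont e_surj])
    have inv_e: "inv e (e x) = x" for x by (simp add: strict_mono_imp_inj_on[OF e_mono])
    show "inv e 0 = 0" using inv_e[of 0] by (simp add: e_def)
    show "inv e (a x) = x" if "0 \<le> x" for x using inv_e[of x] e_pos[OF that] by simp
  qed
qed

lemma powr_tendsto_0_at_top: "0 < (c::real) \<Longrightarrow> c < 1 \<Longrightarrow> ((\<lambda>s. c powr s) \<longlongrightarrow> 0) at_top"
proof -
  assume c: "0 < c" "c < 1"
  have "filterlim (\<lambda>s. ln c * s) at_bot at_top"
    by (rule filterlim_tendsto_neg_mult_at_bot[OF tendsto_const _ filterlim_ident]) (use c in simp)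
  then have "((\<lambda>s. exp (ln c * s)) \<longlongrightarrow> 0) at_top"
    by (rule filterlim_compose[OF exp_at_bot])
  then show ?thesis using c by (simp add: powr_def mult.commute)
qed

lemma class_KL_exponential:
  fixes g a :: "real \<Rightarrow> real"
  assumes g_cont: "\<And>y. isCont g y" and g_mono: "strict_mono g" and g0: "g 0 = 0"
    and Ka: "class_K a" and c: "0 < c" "c < 1"
  shows "class_KL (\<lambda>r s. g (c powr s * a r))"
proof -
  have g_cont_on: "continuous_on A g" for A by (simp add: continuous_at_imp_continuous_on g_cont)
  show ?thesis
    unfolding class_KL_def
  proof (intro conjI allI impI)
    have a_cont: "continuous_on {0..} a" using Ka by (simp add: class_K_def)
    have "continuous_on ({0..} \<times> {0..}) (\<lambda>x. a (fst x))"
      by (rule continuous_on_compose2[OF a_cont continuous_on_fst]) auto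
    then have "continuous_on ({0..} \<times> {0..}) (\<lambda>x. c powr snd x * a (fst x))"
      using c by (intro continuous_intros) auto
    from continuous_on_compose2[OF g_cont_on[of UNIV] this]
    show "continuous_on ({0..} \<times> {0..}) (\<lambda>(r, s). g (c powr s * a r))"
      by (simp add: case_prod_beta')
  next
    fix s :: real
    show "class_K (\<lambda>r. g (c powr s * a r))"
      unfolding class_K_def
    proof (intro conjI)
      have "continuous_on {0..} (\<lambda>r. c powr s * a r)"
        using Ka by (intro continuous_intros) (simp add: class_K_def)
      then show "continuous_on {0..} (\<lambda>r. g (c powr s * a r))"
        by (rule continuous_on_compose2[OF g_cont_on[of UNIV]]) simp
      show "strict_mono_on {0..} (\<lambda>r. g (c powr s * a r))"
        by (rule strict_mono_onI)
           (use c class_K_strict_mono[OF Ka] g_mono in \<open>auto simp: strict_mono_less\<close>)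
      show "g (c powr s * a 0) = 0" using Ka g0 by (simp add: class_K_def)
    qed
  next
    fix r :: real assume r: "0 \<le> r"
    have a_r: "0 \<le> a r" by (rule class_K_nonneg[OF Ka r])
    show "antimono_on {0..} (\<lambda>s. g (c powr s * a r))"
    proof (rule monotone_onI)
      fix s s' :: real assume "s \<in> {0..}" "s' \<in> {0..}" "s \<le> s'"
      then have "c powr s' * a r \<le> c powr s * a r"
        using c a_r by (intro mult_right_mono powr_mono') auto
      then show "g (c powr s' * a r) \<le> g (c powr s * a r)"
        using g_mono by (simp add: strict_mono_less_eq)
    qed
    have "((\<lambda>s. c powr s * a r) \<longlongrightarrow> 0 * a r) at_top"
      by (intro tendsto_mult powr_tendsto_0_at_top c tendsto_const)
    then have "((\<lambda>s. g (c powr s * a r)) \<longlongrightarrow> g 0) at_top"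
      using g_cont by (intro isCont_tendsto_compose[of 0 g]) auto
    then show "((\<lambda>s. g (c powr s * a r)) \<longlongrightarrow> 0) at_top" by (simp add: g0)
  qed
qed

section \<open>Lyapunov functions imply stability\<close>

lemma sofic_shift_closed: "sofic Z \<Longrightarrow> z \<in> Z \<Longrightarrow> shift z \<in> Z"
  unfolding sofic_def walk_labels_def shift_def
proof clarify
  fix S E s assume "\<forall>k. (s k, s (k + 1), z k) \<in> E"
  then have "\<forall>k. (s (k + 1), s (k + 1 + 1), z (k + 1)) \<in> E" by blast
  then show "\<exists>s. \<forall>k. (s k, s (k + 1), z (k + 1)) \<in> E"
    by (intro exI[of _ "\<lambda>k. s (k + 1)"]) simp
qed

lemma funpow_shift_closed:
  "(\<And>z. z \<in> Z \<Longrightarrow> shift z \<in> Z) \<Longrightarrow> z \<in> Z \<Longrightarrow> (shift ^^ k) z \<in> Z"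
  by (induction k) auto

lemma Phi_Suc_shift: "Phi f (Suc k) x z = Phi f k (f x z) (shift z)"
  by (induction k) (simp_all add: funpow_swap1)

lemma decrease_along_solution:
  fixes V :: "'x \<Rightarrow> (int \<Rightarrow> 'a) \<Rightarrow> real"
  assumes closed: "\<And>z. z \<in> Z \<Longrightarrow> shift z \<in> Z"
    and decr: "\<And>x z. z \<in> Z \<Longrightarrow> V (f x z) (shift z) \<le> \<gamma> * V x z"
    and "0 \<le> \<gamma>" and z: "z \<in> Z"
  shows "V (Phi f k x z) ((shift ^^ k) z) \<le> \<gamma> ^ k * V x z"
proof (induction k)
  case (Suc k)
  have "V (Phi f (Suc k) x z) ((shift ^^ Suc k) z) \<le> \<gamma> * V (Phi f k x z) ((shift ^^ k) z)"
    using decr[OF funpow_shift_closed[OF closed z]] by simp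
  also have "\<dots> \<le> \<gamma> * (\<gamma> ^ k * V x z)" using Suc \<open>0 \<le> \<gamma>\<close> by (rule mult_left_mono)
  finally show ?case by simp
qed simp

lemma seq_lyapunov_imp_GUAS:
  assumes closed: "\<And>z. z \<in> Z \<Longrightarrow> shift z \<in> Z" and L: "seq_lyapunov f Z V"
  shows "GUAS f Z"
proof -
  obtain a1 a2 \<gamma> where K1: "class_Kinf a1" and K2: "class_Kinf a2" and \<gamma>: "0 \<le> \<gamma>" "\<gamma> < 1"
    and bounds: "\<And>x z. z \<in> Z \<Longrightarrow> a1 (norm x) \<le> V x z \<and> V x z \<le> a2 (norm x)"
    and decr: "\<And>x z. z \<in> Z \<Longrightarrow> V (f x z) (shift z) \<le> \<gamma> * V x z"
    using L unfolding seq_lyapunov_def by blast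
  have K1': "class_K a1" and K2': "class_K a2" using K1 K2 by (simp_all add: class_Kinf_def)
  obtain g where g_cont: "\<And>y. isCont g y" and g_mono: "strict_mono g" and g0: "g 0 = 0"
    and g_a1: "\<And>x. 0 \<le> x \<Longrightarrow> g (a1 x) = x"
    using class_Kinf_left_inverse[OF K1] by blast
  define c where "c = max \<gamma> (1/2)"
  have c: "0 < c" "c < 1" "\<gamma> \<le> c" using \<gamma> by (auto simp: c_def)
  have "norm (Phi f k x0 z) \<le> g (c powr real k * a2 (norm x0))" if z: "z \<in> Z" for k x0 z
  proof -
    have "a1 (norm (Phi f k x0 z)) \<le> V (Phi f k x0 z) ((shift ^^ k) z)"
      using bounds[OF funpow_shift_closed[OF closed z]] by blast
    also have "\<dots> \<le> \<gamma> ^ k * V x0 z"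
      by (rule decrease_along_solution[where V=V and f=f, OF closed decr \<gamma>(1) z])
    also have "\<dots> \<le> c ^ k * a2 (norm x0)"
      using bounds[OF z, of x0] class_K_nonneg[OF K1', of "norm x0"] \<gamma> c
      by (intro mult_mono power_mono) auto
    also have "\<dots> = c powr real k * a2 (norm x0)" using c by (simp add: powr_realpow)
    finally have "g (a1 (norm (Phi f k x0 z))) \<le> g (c powr real k * a2 (norm x0))"
      using g_mono by (simp add: strict_mono_less_eq)
    then show ?thesis by (simp add: g_a1)
  qed
  with class_KL_exponential[OF g_cont g_mono g0 K2' c(1,2)] show ?thesis
    unfolding GUAS_def by blast
qed

section \<open>Continuous monotone envelopes\<close>

lemma lipschitz_Inf_image:
  fixes K :: "real \<Rightarrow> 'b \<Rightarrow> real"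
  assumes "A \<noteq> {}" and bdd: "\<And>s. bdd_below (K s ` A)"
    and K: "\<And>s s' t. t \<in> A \<Longrightarrow> K s t \<le> K s' t + \<bar>s - s'\<bar>"
  shows "1-lipschitz_on UNIV (\<lambda>s. Inf (K s ` A))"
proof (rule lipschitz_onI)
  have le: "Inf (K s ` A) \<le> Inf (K s' ` A) + \<bar>s - s'\<bar>" for s s'
  proof -
    have "Inf (K s ` A) - \<bar>s - s'\<bar> \<le> Inf (K s' ` A)"
    proof (rule cInf_greatest)
      fix y assume "y \<in> K s' ` A"
      then obtain t where t: "t \<in> A" "y = K s' t" by auto
      have "Inf (K s ` A) \<le> K s t" using t(1) by (intro cInf_lower bdd) auto
      with K[OF t(1), of s s'] t(2) show "Inf (K s ` A) - \<bar>s - s'\<bar> \<le> y" by simp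
    qed (use \<open>A \<noteq> {}\<close> in simp)
    then show ?thesis by simp
  qed
  fix x y :: real
  show "dist (Inf (K x ` A)) (Inf (K y ` A)) \<le> 1 * dist x y"
    using le[of x y] le[of y x] by (simp add: dist_real_def abs_le_iff abs_minus_commute)
qed simp

lemma continuous_mono_majorant_bounded:
  fixes g :: "real \<Rightarrow> real"
  assumes mono: "mono_on {0..} g" and bounds: "\<And>x. 0 \<le> x \<Longrightarrow> 0 \<le> g x \<and> g x < 1"
  obtains P where "continuous_on {0..} P" "mono_on {0..} P"
    "\<And>x. 0 \<le> x \<Longrightarrow> g x \<le> P x" "\<And>x. 0 \<le> x \<Longrightarrow> P x < 1"
proof -
  \<comment> \<open>\<open>P\<close> is the sup-convolution of \<open>g\<close> with the kernel \<open>max 0 (t - r)\<close>, hence 1-Lipschitz.\<close>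
  define K where "K r t = max 0 (t - r) - g t" for r t :: real
  define P where "P r = - Inf (K r ` {0..})" for r
  have bdd: "bdd_below (K r ` {0..})" for r
  proof (rule bdd_belowI[of _ "-1"])
    fix y assume "y \<in> K r ` {0..}"
    then obtain t where "0 \<le> t" "y = K r t" by auto
    then show "-1 \<le> y" using bounds[of t] by (auto simp: K_def)
  qed
  have P_ge: "g r \<le> P r" if "0 \<le> r" for r
  proof -
    have "Inf (K r ` {0..}) \<le> K r r" using that by (intro cInf_lower bdd) auto
    then show ?thesis by (simp add: P_def K_def)
  qed
  have P_le: "P r \<le> g (r + 1)" if r: "0 \<le> r" for r
  proof -
    have "- g (r + 1) \<le> Inf (K r ` {0..})"
    proof (rule cInf_greatest)
      fix y assume "y \<in> K r ` {0..}"
      then obtain t where t: "0 \<le> t" "y = K r t" by auto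
      show "- g (r + 1) \<le> y"
      proof (cases "t \<le> r + 1")
        case True
        then have "g t \<le> g (r + 1)" using t r by (intro mono_onD[OF mono]) auto
        then show ?thesis using t by (auto simp: K_def)
      next
        case False
        then show ?thesis using t bounds[of t] bounds[of "r + 1"] r by (auto simp: K_def)
      qed
    qed simp
    then show ?thesis by (simp add: P_def)
  qed
  have P_mono: "P r \<le> P r'" if "r \<le> r'" for r r'
  proof -
    have "Inf (K r' ` {0..}) \<le> Inf (K r ` {0..})"
    proof (rule cInf_greatest)
      fix y assume "y \<in> K r ` {0..}"
      then obtain t where t: "0 \<le> t" "y = K r t" by auto
      have "Inf (K r' ` {0..}) \<le> K r' t" using t(1) by (intro cInf_lower bdd) auto
      also have "\<dots> \<le> K r t" using that by (auto simp: K_def)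
      finally show "Inf (K r' ` {0..}) \<le> y" using t by simp
    qed simp
    then show ?thesis by (simp add: P_def)
  qed
  have "1-lipschitz_on UNIV (\<lambda>r. Inf (K r ` {0..}))"
    by (rule lipschitz_Inf_image[OF _ bdd]) (auto simp: K_def max_def)
  then have "continuous_on UNIV P"
    unfolding P_def by (intro continuous_intros lipschitz_on_continuous_on)
  show ?thesis
  proof
    show "continuous_on {0..} P" using \<open>continuous_on UNIV P\<close> by (rule continuous_on_subset) simp
    show "mono_on {0..} P" by (rule mono_onI) (rule P_mono)
    show "g x \<le> P x" "P x < 1" if "0 \<le> x" for x
      using P_ge[OF that] P_le[OF that] bounds[of "x + 1"] that by auto
  qed
qed

lemma continuous_mono_majorant:
  fixes g :: "real \<Rightarrow> real"
  assumes mono: "mono_on {0..} g" and nn: "\<And>x. 0 \<le> x \<Longrightarrow> 0 \<le> g x"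
  obtains G where "continuous_on {0..} G" "mono_on {0..} G" "\<And>x. 0 \<le> x \<Longrightarrow> g x \<le> G x"
proof -
  \<comment> \<open>Compress \<open>g\<close> into \<open>[0, 1)\<close> by \<open>x \<mapsto> x / (1 + x)\<close>, take a bounded majorant \<open>P\<close>,
    and decompress by the inverse map \<open>y \<mapsto> y / (1 - y)\<close>.\<close>
  have compress_mono: "mono_on {0..} (\<lambda>x. g x / (1 + g x))"
  proof (rule mono_onI)
    fix x y :: real assume "x \<in> {0..}" "y \<in> {0..}" "x \<le> y"
    then show "g x / (1 + g x) \<le> g y / (1 + g y)"
      using mono_onD[OF mono, of x y] nn[of x] nn[of y] by (simp add: field_simps)
  qed
  have compress_bounds: "0 \<le> g x / (1 + g x) \<and> g x / (1 + g x) < 1" if "0 \<le> x" for x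
    using nn[OF that] by simp
  obtain P where P_cont: "continuous_on {0..} P" and P_mono: "mono_on {0..} P"
    and P_ge: "\<And>x. 0 \<le> x \<Longrightarrow> g x / (1 + g x) \<le> P x" and P_lt: "\<And>x. 0 \<le> x \<Longrightarrow> P x < 1"
    using continuous_mono_majorant_bounded[OF compress_mono compress_bounds] by auto
  have P_nonneg: "0 \<le> P x" if "0 \<le> x" for x
    using P_ge[OF that] compress_bounds[OF that] by linarith
  have decompress_mono: "a / (1 - a) \<le> b / (1 - b)" if "0 \<le> a" "a \<le> b" "b < 1" for a b :: real
    using that by (simp add: field_simps)
  show ?thesis
  proof
    show "continuous_on {0..} (\<lambda>r. P r / (1 - P r))"
      using P_cont by (intro continuous_intros) (auto dest: P_lt)
    show "mono_on {0..} (\<lambda>r. P r / (1 - P r))"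
    proof (rule mono_onI)
      fix r r' :: real assume "r \<in> {0..}" "r' \<in> {0..}" "r \<le> r'"
      then show "P r / (1 - P r) \<le> P r' / (1 - P r')"
        using P_nonneg P_lt mono_onD[OF P_mono] by (intro decompress_mono) auto
    qed
    fix x :: real assume x: "0 \<le> x"
    let ?c = "g x / (1 + g x)"
    have "g x = ?c / (1 - ?c)" using nn[OF x] by (simp add: field_simps)
    also have "\<dots> \<le> P x / (1 - P x)"
      using P_ge[OF x] P_lt[OF x] nn[OF x] by (intro decompress_mono) auto
    finally show "g x \<le> P x / (1 - P x)" .
  qed
qed

lemma continuous_mono_minorant:
  fixes v :: "real \<Rightarrow> real"
  assumes mono: "mono_on {0..} v" and nn: "\<And>x. 0 \<le> x \<Longrightarrow> 0 \<le> v x"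
  obtains w where "continuous_on {0..} w" "mono_on {0..} w" "\<And>s. 0 \<le> s \<Longrightarrow> w s \<le> v s"
    "\<And>s. 0 \<le> s \<Longrightarrow> min (v (s / 2)) (s / 2) \<le> w s"
proof -
  \<comment> \<open>\<open>w\<close> is the inf-convolution of \<open>v\<close> with the kernel \<open>max 0 (s - t)\<close>, hence 1-Lipschitz.\<close>
  define K where "K s t = v t + max 0 (s - t)" for s t :: real
  define w where "w s = Inf (K s ` {0..})" for s
  have bdd: "bdd_below (K s ` {0..})" for s
    by (rule bdd_belowI[of _ 0]) (auto simp: K_def intro: add_nonneg_nonneg nn)
  have w_le: "w s \<le> K s t" if "0 \<le> t" for s t
    unfolding w_def by (rule cInf_lower[OF _ bdd]) (use that in auto)
  have w_mono: "w s \<le> w s'" if "s \<le> s'" for s s'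
    unfolding w_def[of s']
  proof (rule cInf_greatest)
    fix y assume "y \<in> K s' ` {0..}"
    then obtain t where t: "0 \<le> t" "y = K s' t" by auto
    have "w s \<le> K s t" by (rule w_le[OF t(1)])
    also have "\<dots> \<le> K s' t" using that by (auto simp: K_def)
    finally show "w s \<le> y" using t by simp
  qed simp
  have w_ge: "min (v (s / 2)) (s / 2) \<le> w s" if "0 \<le> s" for s
    unfolding w_def
  proof (rule cInf_greatest)
    fix y assume "y \<in> K s ` {0..}"
    then obtain t where t: "0 \<le> t" "y = K s t" by auto
    show "min (v (s / 2)) (s / 2) \<le> y"
    proof (cases "s / 2 \<le> t")
      case True
      then have "v (s / 2) \<le> v t" using that by (intro mono_onD[OF mono]) auto
      then show ?thesis using t by (auto simp: K_def)
    next
      case False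
      then show ?thesis using t nn[of t] by (auto simp: K_def)
    qed
  qed simp
  have "1-lipschitz_on UNIV w"
    unfolding w_def by (rule lipschitz_Inf_image[OF _ bdd]) (auto simp: K_def max_def)
  then have "continuous_on UNIV w" by (rule lipschitz_on_continuous_on)
  show ?thesis
  proof
    show "continuous_on {0..} w" using \<open>continuous_on UNIV w\<close> by (rule continuous_on_subset) simp
    show "mono_on {0..} w" by (rule mono_onI) (rule w_mono)
    show "w s \<le> v s" if "0 \<le> s" for s using w_le[OF that, of s] by (simp add: K_def)
  qed (rule w_ge)
qed

lemma class_Kinf_minorant:
  fixes v :: "real \<Rightarrow> real"
  assumes mono: "mono_on {0..} v" and v0: "v 0 = 0" and pos: "\<And>x. 0 < x \<Longrightarrow> 0 < v x"
    and unbounded: "\<And>M. \<exists>x\<ge>0. M < v x"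
  obtains h where "class_Kinf h" "\<And>x. 0 \<le> x \<Longrightarrow> h x \<le> v x"
proof -
  have nn: "0 \<le> v x" if "0 \<le> x" for x using that pos v0 by (cases "x = 0") (auto intro: less_imp_le)
  obtain w where w_cont: "continuous_on {0..} w" and w_mono: "mono_on {0..} w"
    and w_le: "\<And>s. 0 \<le> s \<Longrightarrow> w s \<le> v s" and w_ge: "\<And>s. 0 \<le> s \<Longrightarrow> min (v (s / 2)) (s / 2) \<le> w s"
    using continuous_mono_minorant[OF mono nn] by blast
  have w_nonneg: "0 \<le> w s" if "0 \<le> s" for s using w_ge[OF that] nn[of "s / 2"] that by simp
  \<comment> \<open>The factor \<open>s / (1 + s)\<close> turns the nondecreasing \<open>w\<close> into a strictly increasing function.\<close>
  define h where "h s = w s * (s / (1 + s))" for s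
  have h_strict: "h s < h s'" if "0 \<le> s" "s < s'" for s s'
  proof -
    have "h s \<le> w s' * (s / (1 + s))"
      unfolding h_def using mono_onD[OF w_mono, of s s'] that by (intro mult_right_mono) auto
    also have "\<dots> < h s'"
      unfolding h_def using that w_ge[of s'] pos[of "s' / 2"]
      by (intro mult_strict_left_mono) (auto simp: field_simps)
    finally show ?thesis .
  qed
  have h_unbounded: "\<exists>r\<ge>0. M < h r" for M
  proof -
    obtain x0 where x0: "0 \<le> x0" "2 * M < v x0" using unbounded by blast
    define s where "s = 2 * max x0 (max 1 (2 * \<bar>M\<bar> + 1))"
    have s: "x0 \<le> s / 2" "1 \<le> s / 2" "2 * M < s / 2" unfolding s_def by auto
    have "v x0 \<le> v (s / 2)" using s x0 by (intro mono_onD[OF mono]) auto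
    then have "2 * M < w s" using w_ge[of s] x0 s by auto
    moreover have "w s * (1 / 2) \<le> h s"
      unfolding h_def using w_nonneg[of s] s by (intro mult_left_mono) (auto simp: field_simps)
    ultimately show ?thesis using s by (intro exI[of _ s]) auto
  qed
  show ?thesis
  proof
    have "continuous_on {0..} h" unfolding h_def by (intro continuous_intros w_cont) auto
    then show "class_Kinf h"
      unfolding class_Kinf_def class_K_def
      using h_strict h_unbounded by (auto intro: strict_mono_onI simp: h_def)
    show "h x \<le> v x" if "0 \<le> x" for x
    proof -
      have "h x \<le> w x * 1" unfolding h_def using w_nonneg[OF that] that by (intro mult_left_mono) auto
      then show ?thesis using w_le[OF that] by simp
    qed
  qed
qed

section \<open>A discrete \<open>\<K>\<L>\<close> estimate\<close>

lemma class_KL_class_K: "class_KL \<beta> \<Longrightarrow> 0 \<le> s \<Longrightarrow> class_K (\<lambda>r. \<beta> r s)"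
  by (simp add: class_KL_def)

lemma class_KL_antimono:
  assumes "class_KL \<beta>" "0 \<le> r" "0 \<le> s" "s \<le> s'"
  shows "\<beta> r s' \<le> \<beta> r s"
proof -
  have "antimono_on {0..} (\<beta> r)" using assms by (simp add: class_KL_def)
  from monotone_onD[OF this, of s s'] assms show ?thesis by simp
qed

lemma class_KL_eventually_less:
  assumes "class_KL \<beta>" "0 \<le> r" "0 < e"
  shows "\<exists>n. \<beta> r (real n) < e"
proof -
  have "(\<beta> r \<longlongrightarrow> 0) at_top" using assms by (simp add: class_KL_def)
  then have "((\<lambda>n. \<beta> r (real n)) \<longlongrightarrow> 0) sequentially"
    by (rule filterlim_compose[OF _ filterlim_real_sequentially])
  from order_tendstoD(2)[OF this \<open>0 < e\<close>] show ?thesis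
    by (meson eventually_sequentially order_refl)
qed

lemma class_KL_small_near_zero:
  assumes "class_KL \<beta>" "0 < e"
  shows "\<exists>d>0. \<forall>r. 0 \<le> r \<longrightarrow> r < d \<longrightarrow> \<beta> r 0 < e"
proof -
  have K: "class_K (\<lambda>r. \<beta> r 0)" using class_KL_class_K[OF assms(1)] by simp
  then have "continuous_on {0..} (\<lambda>r. \<beta> r 0)" and "\<beta> 0 0 = 0" by (simp_all add: class_K_def)
  then obtain d where "0 < d" "\<forall>r\<in>{0..}. dist r 0 < d \<longrightarrow> dist (\<beta> r 0) 0 < e"
    using \<open>0 < e\<close> unfolding continuous_on_iff by (metis atLeast_iff order_refl)
  then show ?thesis by (intro exI[of _ d]) (auto simp: dist_real_def)
qed

lemma class_KL_settling_time:
  assumes KL: "class_KL \<beta>"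
  obtains N :: "real \<Rightarrow> nat"
  where "mono_on {0..} N" "\<And>r k. 0 \<le> r \<Longrightarrow> 1 / (r + 1) \<le> \<beta> r (real k) \<Longrightarrow> k < N r"
proof
  define N where "N r = (LEAST n. \<beta> r (real n) < 1 / (r + 1))" for r
  have N: "\<beta> r (real (N r)) < 1 / (r + 1)" if "0 \<le> r" for r
    unfolding N_def by (rule LeastI_ex) (rule class_KL_eventually_less[OF KL that], use that in simp)
  show "k < N r" if "0 \<le> r" "1 / (r + 1) \<le> \<beta> r (real k)" for r k
  proof (rule ccontr)
    assume "\<not> k < N r"
    then have "\<beta> r (real k) \<le> \<beta> r (real (N r))" using that by (intro class_KL_antimono[OF KL]) auto
    then show False using N[OF that(1)] that(2) by simp
  qed
  show "mono_on {0..} N"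
  proof (rule mono_onI)
    fix r r' :: real assume "r \<in> {0..}" "r' \<in> {0..}" "r \<le> r'"
    then have "\<beta> r (real (N r')) \<le> \<beta> r' (real (N r'))"
      by (intro class_K_mono[OF class_KL_class_K[OF KL]]) auto
    also have "\<dots> < 1 / (r' + 1)" using N \<open>r' \<in> {0..}\<close> by auto
    also have "\<dots> \<le> 1 / (r + 1)" using \<open>r \<in> {0..}\<close> \<open>r \<le> r'\<close> by (simp add: field_simps)
    finally show "N r \<le> N r'" unfolding N_def[of r] by (rule Least_le)
  qed
qed

lemma class_KL_gain:
  assumes KL: "class_KL \<beta>"
  obtains a where "class_Kinf a"
    and "\<And>r k. 0 \<le> r \<Longrightarrow> 1 / (r + 1) \<le> \<beta> r (real k) \<Longrightarrow> r \<le> a r / 2 ^ k"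
proof -
  obtain N where N_mono: "mono_on {0..} N"
    and less_N: "\<And>r k. 0 \<le> r \<Longrightarrow> 1 / (r + 1) \<le> \<beta> r (real k) \<Longrightarrow> k < N r"
    using class_KL_settling_time[OF KL] by blast
  have "mono_on {0..} (\<lambda>r. (2::real) ^ N r)"
    by (rule mono_onI) (use mono_onD[OF N_mono] in \<open>auto intro: power_increasing\<close>)
  then obtain G where G_cont: "continuous_on {0..} G" and G_mono: "mono_on {0..} G"
    and G_ge: "\<And>r. 0 \<le> r \<Longrightarrow> (2::real) ^ N r \<le> G r"
    using continuous_mono_majorant[of "\<lambda>r. (2::real) ^ N r"] by auto
  have G_nonneg: "0 \<le> G r" if "0 \<le> r" for r
    using G_ge[OF that] zero_le_power[of "2::real" "N r"] by linarith
  show ?thesis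
  proof
    show "r \<le> (r + r * G r) / 2 ^ k" if "0 \<le> r" "1 / (r + 1) \<le> \<beta> r (real k)" for r k
    proof -
      have "r * 2 ^ k \<le> r * 2 ^ N r"
        using less_N[OF that] that(1) by (intro mult_left_mono power_increasing) auto
      also have "\<dots> \<le> r * G r" using G_ge[OF that(1)] that(1) by (rule mult_left_mono)
      finally show ?thesis using that(1) by (simp add: field_simps)
    qed
    have strict: "r + r * G r < r' + r' * G r'" if "0 \<le> r" "r < r'" for r r'
      using that mono_onD[OF G_mono, of r r'] G_nonneg[of r] by (intro add_less_le_mono mult_mono) auto
    have unbounded: "\<exists>r\<ge>0. M < r + r * G r" for M
    proof (intro exI[of _ "\<bar>M\<bar> + 1"] conjI)
      have "0 \<le> (\<bar>M\<bar> + 1) * G (\<bar>M\<bar> + 1)" using G_nonneg[of "\<bar>M\<bar> + 1"] by simp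
      then show "M < \<bar>M\<bar> + 1 + (\<bar>M\<bar> + 1) * G (\<bar>M\<bar> + 1)" by linarith
    qed simp
    have "continuous_on {0..} (\<lambda>r. r + r * G r)" by (intro continuous_intros G_cont)
    moreover have "strict_mono_on {0..} (\<lambda>r. r + r * G r)"
      by (rule strict_mono_onI) (use strict in auto)
    ultimately show "class_Kinf (\<lambda>r. r + r * G r)"
      unfolding class_Kinf_def class_K_def using unbounded by auto
  qed
qed

text \<open>
  \<open>decay_level \<beta> a s\<close> is the largest value (capped at \<open>s\<close>) that \<open>h s\<close> may take if
  \<open>h (\<beta> r k) \<le> a r / 2\<^sup>k\<close> is to hold for all \<open>r\<close>, \<open>k\<close>.
\<close>

definition decay_level :: "(real \<Rightarrow> real \<Rightarrow> real) \<Rightarrow> (real \<Rightarrow> real) \<Rightarrow> real \<Rightarrow> real" where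
  "decay_level \<beta> a s = Inf (insert s {a r / 2 ^ k | r k. 0 \<le> r \<and> s \<le> \<beta> r (real k)})"

lemma decay_level_greatest:
  assumes "m \<le> s" "\<And>r k. 0 \<le> r \<Longrightarrow> s \<le> \<beta> r (real k) \<Longrightarrow> m \<le> a r / 2 ^ k"
  shows "m \<le> decay_level \<beta> a s"
  unfolding decay_level_def
proof (rule cInf_greatest)
  fix y assume "y \<in> insert s {a r / 2 ^ k | r k. 0 \<le> r \<and> s \<le> \<beta> r (real k)}"
  then show "m \<le> y" using assms by blast
qed simp

lemma
  assumes "class_K a" "0 \<le> s"
  shows decay_level_le: "0 \<le> r \<Longrightarrow> s \<le> \<beta> r (real k) \<Longrightarrow> decay_level \<beta> a s \<le> a r / 2 ^ k"
    and decay_level_le_self: "decay_level \<beta> a s \<le> s"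
proof -
  let ?A = "insert s {a r / 2 ^ k | r k. 0 \<le> r \<and> s \<le> \<beta> r (real k)}"
  have bdd: "bdd_below ?A"
  proof (rule bdd_belowI)
    fix y assume "y \<in> ?A"
    then show "0 \<le> y" using assms class_K_nonneg[OF assms(1)] by fastforce
  qed
  show "decay_level \<beta> a s \<le> a r / 2 ^ k" if "0 \<le> r" "s \<le> \<beta> r (real k)"
    unfolding decay_level_def by (rule cInf_lower[OF _ bdd]) (use that in blast)
  show "decay_level \<beta> a s \<le> s"
    unfolding decay_level_def by (rule cInf_lower[OF _ bdd]) simp
qed

lemma decay_level_nonneg: "class_K a \<Longrightarrow> 0 \<le> s \<Longrightarrow> 0 \<le> decay_level \<beta> a s"
  by (rule decay_level_greatest) (simp_all add: class_K_nonneg)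

lemma decay_level_mono:
  assumes "class_K a"
  shows "mono_on {0..} (decay_level \<beta> a)"
proof (rule mono_onI)
  fix s s' :: real assume "s \<in> {0..}" and "s \<le> s'"
  then have s: "0 \<le> s" by simp
  show "decay_level \<beta> a s \<le> decay_level \<beta> a s'"
  proof (rule decay_level_greatest)
    show "decay_level \<beta> a s \<le> s'" using decay_level_le_self[OF assms s, where \<beta>=\<beta>] \<open>s \<le> s'\<close> by simp
    fix r k assume "0 \<le> r" "s' \<le> \<beta> r (real k)"
    then show "decay_level \<beta> a s \<le> a r / 2 ^ k"
      using decay_level_le[OF assms s] \<open>s \<le> s'\<close> by simp
  qed
qed

context
  fixes \<beta> a
  assumes KL: "class_KL \<beta>" and Ka: "class_K a"
    and gain: "\<And>r k. 0 \<le> r \<Longrightarrow> 1 / (r + 1) \<le> \<beta> r (real k) \<Longrightarrow> r \<le> a r / 2 ^ k"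
begin

lemma decay_level_pos:
  assumes s: "0 < s"
  shows "0 < decay_level \<beta> a s"
proof -
  obtain d where d: "0 < d" "\<And>r. 0 \<le> r \<Longrightarrow> r < d \<Longrightarrow> \<beta> r 0 < s"
    using class_KL_small_near_zero[OF KL s] by blast
  obtain M where M: "\<beta> (1 / s) (real M) < s"
    using class_KL_eventually_less[OF KL _ s] s by fastforce
  define m where "m = min s (min d (a d / 2 ^ M))"
  have "0 < m" using s d class_K_strict_mono[OF Ka, of 0 d] Ka by (simp add: m_def class_K_def)
  also have "m \<le> decay_level \<beta> a s"
  proof (rule decay_level_greatest)
    show "m \<le> s" by (simp add: m_def)
    fix r k assume r: "0 \<le> r" and rk: "s \<le> \<beta> r (real k)"
    have "d \<le> r"
    proof (rule ccontr)
      assume "\<not> d \<le> r"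
      then have "\<beta> r (real k) < s"
        using d(2)[OF r] class_KL_antimono[OF KL r, of 0 "real k"] by fastforce
      then show False using rk by simp
    qed
    show "m \<le> a r / 2 ^ k"
    proof (cases "1 / (r + 1) \<le> s")
      case True
      then have "r \<le> a r / 2 ^ k" using gain r rk by fastforce
      then show ?thesis using \<open>d \<le> r\<close> by (simp add: m_def)
    next
      case False
      then have "r < 1 / s" using s r by (simp add: field_simps)
      have "k < M"
      proof (rule ccontr)
        assume "\<not> k < M"
        then have "\<beta> r (real k) \<le> \<beta> (1 / s) (real k)"
          using r \<open>r < 1 / s\<close> by (intro class_K_mono[OF class_KL_class_K[OF KL]]) auto
        also have "\<dots> \<le> \<beta> (1 / s) (real M)"
          using s \<open>\<not> k < M\<close> by (intro class_KL_antimono[OF KL]) auto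
        finally show False using M rk by simp
      qed
      have "a d / 2 ^ M \<le> a r / 2 ^ M"
        using class_K_mono[OF Ka, of d r] d \<open>d \<le> r\<close> by (simp add: divide_right_mono)
      also have "\<dots> \<le> a r / 2 ^ k"
        using \<open>k < M\<close> class_K_nonneg[OF Ka r] by (intro divide_left_mono power_increasing) auto
      finally show ?thesis by (simp add: m_def)
    qed
  qed
  finally show ?thesis .
qed

lemma decay_level_unbounded: "\<exists>s\<ge>0. M < decay_level \<beta> a s"
proof -
  define R where "R = \<bar>M\<bar> + 1"
  define s where "s = max R (max 1 (\<beta> R 0 + 1))"
  have "R \<le> decay_level \<beta> a s"
  proof (rule decay_level_greatest)
    show "R \<le> s" by (simp add: s_def)
    fix r k assume r: "0 \<le> r" and rk: "s \<le> \<beta> r (real k)"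
    have "R < r"
    proof (rule ccontr)
      assume "\<not> R < r"
      then have "\<beta> r 0 \<le> \<beta> R 0" using r by (intro class_K_mono[OF class_KL_class_K[OF KL]]) auto
      moreover have "\<beta> r (real k) \<le> \<beta> r 0" using r by (intro class_KL_antimono[OF KL]) auto
      ultimately show False using rk by (simp add: s_def)
    qed
    have "1 / (r + 1) \<le> 1" using r by simp
    then have "r \<le> a r / 2 ^ k" using gain[OF r] rk by (simp add: s_def)
    then show "R \<le> a r / 2 ^ k" using \<open>R < r\<close> by simp
  qed
  then show ?thesis by (intro exI[of _ s]) (auto simp: R_def s_def)
qed

end

lemma class_KL_discrete_estimate:
  assumes KL: "class_KL \<beta>"
  obtains h a where "class_Kinf h" "class_Kinf a"
    and "\<And>r k. 0 \<le> r \<Longrightarrow> h (\<beta> r (real k)) \<le> a r / 2 ^ k"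
proof -
  obtain a where Ka: "class_Kinf a"
    and gain: "\<And>r k. 0 \<le> r \<Longrightarrow> 1 / (r + 1) \<le> \<beta> r (real k) \<Longrightarrow> r \<le> a r / 2 ^ k"
    using class_KL_gain[OF KL] by blast
  have Ka': "class_K a" using Ka by (simp add: class_Kinf_def)
  have "decay_level \<beta> a 0 = 0"
    using decay_level_le_self[OF Ka' order_refl, where \<beta>=\<beta>]
      decay_level_nonneg[OF Ka' order_refl, where \<beta>=\<beta>] by simp
  then obtain h where Kh: "class_Kinf h" and h_le: "\<And>s. 0 \<le> s \<Longrightarrow> h s \<le> decay_level \<beta> a s"
    using class_Kinf_minorant[OF decay_level_mono[OF Ka']] decay_level_pos[OF KL Ka' gain]
      decay_level_unbounded[OF KL Ka' gain] by blast
  have "h (\<beta> r (real k)) \<le> a r / 2 ^ k" if "0 \<le> r" for r k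
  proof -
    have "0 \<le> \<beta> r (real k)" using class_K_nonneg[OF class_KL_class_K[OF KL]] that by simp
    then show ?thesis using h_le decay_level_le[OF Ka' _ that order_refl] by (meson order_trans)
  qed
  with Kh Ka that show ?thesis by blast
qed

section \<open>The converse Lyapunov theorem\<close>

lemma GUAS_imp_seq_lyapunov:
  assumes "GUAS f Z"
  shows "\<exists>V. seq_lyapunov f Z V"
proof -
  obtain \<beta> where KL: "class_KL \<beta>"
    and bound: "\<And>k x z. z \<in> Z \<Longrightarrow> norm (Phi f k x z) \<le> \<beta> (norm x) (real k)"
    using assms unfolding GUAS_def by blast
  obtain h a where Kh: "class_Kinf h" and Ka: "class_Kinf a"
    and estimate: "\<And>r k. 0 \<le> r \<Longrightarrow> h (\<beta> r (real k)) \<le> a r / 2 ^ k"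
    using class_KL_discrete_estimate[OF KL] by blast
  define V where "V x z = (SUP k. 2 ^ k * h (norm (Phi f k x z)))" for x z
  have term_le: "2 ^ k * h (norm (Phi f k x z)) \<le> a (norm x)" if z: "z \<in> Z" for k x z
  proof -
    have "h (norm (Phi f k x z)) \<le> h (\<beta> (norm x) (real k))"
      using class_K_mono[of h] Kh bound[OF z] by (simp add: class_Kinf_def)
    also have "\<dots> \<le> a (norm x) / 2 ^ k" by (rule estimate) simp
    finally show ?thesis by (simp add: field_simps)
  qed
  then have term_le_V: "2 ^ k * h (norm (Phi f k x z)) \<le> V x z" if "z \<in> Z" for k x z
    unfolding V_def using that by (intro cSUP_upper bdd_aboveI2) auto
  have "h (norm x) \<le> V x z" "V x z \<le> a (norm x)" "V (f x z) (shift z) \<le> 1 / 2 * V x z"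
    if z: "z \<in> Z" for x z
  proof -
    show "h (norm x) \<le> V x z" using term_le_V[OF z, of 0] by simp
    show "V x z \<le> a (norm x)" unfolding V_def by (rule cSUP_least) (auto intro: term_le[OF z])
    show "V (f x z) (shift z) \<le> 1 / 2 * V x z"
      unfolding V_def[of "f x z"]
    proof (rule cSUP_least)
      fix k
      show "2 ^ k * h (norm (Phi f k (f x z) (shift z))) \<le> 1 / 2 * V x z"
        using term_le_V[OF z, of "Suc k" x] unfolding Phi_Suc_shift by (simp add: algebra_simps)
    qed simp
  qed
  then have "seq_lyapunov f Z V"
    unfolding seq_lyapunov_def using Kh Ka by (intro exI[of _ h] exI[of _ a] exI[of _ "1 / 2"]) auto
  then show ?thesis by blast
qed

theorem mainTheorem1:
  fixes Z :: "(int \<Rightarrow> 'a::countable) set"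
    and f :: "real^'n \<Rightarrow> (int \<Rightarrow> 'a) \<Rightarrow> real^'n"
  assumes "sofic Z"
  shows "GUAS f Z \<longleftrightarrow> (\<exists>V. seq_lyapunov f Z V)"
  using seq_lyapunov_imp_GUAS[OF sofic_shift_closed[OF assms]] GUAS_imp_seq_lyapunov by blast

end
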